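(* Let $G$, $k\ge 3$, the choice strings $c_{i,j}$, $L=k+1$ and $d=k-2$ be as in the construction in the context, and let $s$ be a string of length $L$ such that every choice string $c_{i,j}$ ($1\le i<j\le k$) has a substring of length $L$ at Hamming distance at most $d$ from $s$. Then the first $k$ characters of $s$ are encoding symbols $\sigma_{h_1},\dots,\sigma_{h_k}$, and the vertices $v_{h_1},\dots,v_{h_k}$ are $k$ vertices forming a clique in $G$.
   Context: Let $G=(V,E)$ be an undirected simple graph with $V=\{v_1,\dots,v_n\}$ and edge set $E=\{e_1,\dots,e_m\}$, and let $k\ge 3$ be an integer; put $N=\binom{k}{2}$. The alphabet consists of pairwise distinct symbols: encoding symbols $\sigma_1,\dots,\sigma_n$, string identification symbols $\varphi_1,\dots,\varphi_N$, and a synchronizing symbol $\#$. Order the pairs $(i,j)$ with $1\le i<j\le k$ lexicographically, $(1,2),(1,3),\dots,(1,k),(2,3),\dots,(k-1,k)$, and let $i'$ denote the position of $(i,j)$ in this order. For an edge $e$ joining $v_r$ and $v_s$ with $r<s$ define $\mathrm{block}(i,j,e)=\varphi_{i'}^{\,i-1}\,\sigma_r\,\varphi_{i'}^{\,j-i-1}\,\sigma_s\,\varphi_{i'}^{\,k-j}\,\#$ (a string of length $k+1$), and the choice string $c_{i,j}=\mathrm{block}(i,j,e_1)\,\varphi_{i'}^{\,k}\,\mathrm{block}(i,j,e_2)\,\varphi_{i'}^{\,k}\cdots\varphi_{i'}^{\,k}\,\mathrm{block}(i,j,e_m)$. Set $L=k+1$ and $d=k-2$. *)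

theory Defs
  imports Main
begin

text \<open>Alphabet: encoding symbols sigma_r, identification symbols phi_i, and the
  synchronizing symbol #. The datatype makes all symbols pairwise distinct.\<close>
datatype sym = Enc nat | Ident nat | Sync

text \<open>Position (1-based) of the pair (i,j) in the lexicographic order of the pairs
  (a,b) with 1 \<le> a < b \<le> k.\<close>
definition pair_index :: "nat \<Rightarrow> nat \<Rightarrow> nat \<Rightarrow> nat" where
  "pair_index k i j =
     card {(a, b). 1 \<le> a \<and> a < b \<and> b \<le> k \<and> (a < i \<or> (a = i \<and> b \<le> j))}"

text \<open>An edge joining v_r and v_s with r < s is represented by the pair (r, s).\<close>
definition block :: "nat \<Rightarrow> nat \<Rightarrow> nat \<Rightarrow> nat \<times> nat \<Rightarrow> sym list" where
  "block k i j e =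
     (let p = Ident (pair_index k i j); r = fst e; s = snd e in
      replicate (i - 1) p @ [Enc r] @ replicate (j - i - 1) p @ [Enc s]
      @ replicate (k - j) p @ [Sync])"

fun join_with :: "'a list \<Rightarrow> 'a list list \<Rightarrow> 'a list" where
  "join_with sep [] = []"
| "join_with sep [x] = x"
| "join_with sep (x # y # zs) = x @ sep @ join_with sep (y # zs)"

definition choice_string :: "nat \<Rightarrow> (nat \<times> nat) list \<Rightarrow> nat \<Rightarrow> nat \<Rightarrow> sym list" where
  "choice_string k es i j =
     join_with (replicate k (Ident (pair_index k i j))) (map (block k i j) es)"

definition hamming :: "'a list \<Rightarrow> 'a list \<Rightarrow> nat" where
  "hamming xs ys = card {t. t < length xs \<and> t < length ys \<and> xs ! t \<noteq> ys ! t}"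

definition is_substring :: "'a list \<Rightarrow> 'a list \<Rightarrow> bool" where
  "is_substring t c \<longleftrightarrow> (\<exists>u w. c = u @ t @ w)"

definition adjacent :: "(nat \<times> nat) list \<Rightarrow> nat \<Rightarrow> nat \<Rightarrow> bool" where
  "adjacent es a b \<longleftrightarrow> (min a b, max a b) \<in> set es"

end

theory Submission
  imports Defs
begin

(*
  Let t_ij be a window of c_ij within distance k - 2 of s, so s and t_ij agree in at least three
  of their k + 1 positions. The blocks of c_ij repeat with period 2k + 1, so apart from phi_(i,j)
  a window contains at most three symbols: a # and two encoding symbols at fixed offsets from it.
  Hence either s contains phi_(i,j), or s agrees with t_ij exactly in these three symbols, which
  then all lie inside the window. The symbols phi_(i,j) are pairwise distinct, so the
  identification symbols of s can serve only few pairs. Counting over the pairs (1, j) and one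
  pair (2, j) shows in turn that s has at most k - 2 identification symbols, that s ends in #
  and starts with an encoding symbol, and finally that s has no identification symbol at all.
  Then every window t_ij is a whole block, and s_(i-1), s_(j-1) encode the edge of that block.
*)

fun is_enc :: "sym \<Rightarrow> bool" where
  "is_enc (Enc _) = True"
| "is_enc _ = False"

fun is_ident :: "sym \<Rightarrow> bool" where
  "is_ident (Ident _) = True"
| "is_ident _ = False"

fun enc_index :: "sym \<Rightarrow> nat" where
  "enc_index (Enc r) = r"
| "enc_index _ = 0"

lemma Enc_enc_index: "is_enc c \<Longrightarrow> Enc (enc_index c) = c"
  by (cases c) auto

lemma not_is_ident_if_is_enc: "is_enc c \<Longrightarrow> \<not> is_ident c"
  by (cases c) auto

lemma length_block:
  "1 \<le> i \<Longrightarrow> i < j \<Longrightarrow> j \<le> k \<Longrightarrow> length (block k i j e) = k + 1"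
  by (simp add: block_def Let_def)

lemma nth_block:
  assumes "1 \<le> i" "i < j" "j \<le> k" "y \<le> k"
  shows "block k i j e ! y =
    (if y = i - 1 then Enc (fst e) else if y = j - 1 then Enc (snd e)
     else if y = k then Sync else Ident (pair_index k i j))"
  using assms by (auto simp: block_def Let_def nth_append nth_Cons')

lemma join_with_append_sep:
  "xs \<noteq> [] \<Longrightarrow> join_with sep xs @ sep = concat (map (\<lambda>x. x @ sep) xs)"
  by (induction sep xs rule: join_with.induct) auto

lemma nth_concat_equal_length:
  assumes "\<forall>x \<in> set xss. length x = L" "p < length (concat xss)"
  shows "p div L < length xss \<and> concat xss ! p = xss ! (p div L) ! (p mod L)"
  using assms
proof (induction xss arbitrary: p)
  case (Cons x xss)
  show ?case
  proof (cases "p < L")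
    case True
    then show ?thesis using Cons.prems by (simp add: nth_append)
  next
    case False
    have "0 < L" using Cons.prems by (auto intro!: gr0I simp: concat_eq_Nil_conv[THEN iffD2])
    then have "p div L = Suc ((p - L) div L)" "p mod L = (p - L) mod L"
      using False by (simp_all add: le_div_geq le_mod_geq)
    then show ?thesis using Cons.prems Cons.IH[of "p - L"] False by (simp add: nth_append)
  qed
qed simp

lemma nth_choice_string:
  assumes "1 \<le> i" "i < j" "j \<le> k" "A < length (choice_string k es i j)"
  shows "A div (2 * k + 1) < length es \<and> choice_string k es i j ! A =
    (if A mod (2 * k + 1) \<le> k then block k i j (es ! (A div (2 * k + 1))) ! (A mod (2 * k + 1))
     else Ident (pair_index k i j))"
proof -
  let ?sep = "replicate k (Ident (pair_index k i j))"
  let ?xss = "map (\<lambda>e. block k i j e @ ?sep) es"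
  have "es \<noteq> []" using assms(4) by (auto simp: choice_string_def)
  then have c: "choice_string k es i j @ ?sep = concat ?xss"
    by (simp add: choice_string_def join_with_append_sep comp_def)
  have "\<forall>x \<in> set ?xss. length x = 2 * k + 1" using assms(1-3) by (auto simp: length_block)
  moreover have "A < length (concat ?xss)" using assms(4) arg_cong[OF c, of length] by simp
  ultimately have "A div (2 * k + 1) < length ?xss \<and>
      concat ?xss ! A = ?xss ! (A div (2 * k + 1)) ! (A mod (2 * k + 1))"
    by (rule nth_concat_equal_length)
  moreover have "choice_string k es i j ! A = concat ?xss ! A"
    using c assms(4) by (metis nth_append)
  moreover have "A mod (2 * k + 1) \<le> k \<or> A mod (2 * k + 1) - (k + 1) < k"
    using mod_less_divisor[of "2 * k + 1" A] by linarith
  ultimately show ?thesis using assms(1-3) by (auto simp: nth_append length_block)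
qed

lemma nth_choice_string_cases:
  assumes "1 \<le> i" "i < j" "j \<le> k" "A < length (choice_string k es i j)"
  obtains "choice_string k es i j ! A = Ident (pair_index k i j)"
  | "A mod (2 * k + 1) = k" "choice_string k es i j ! A = Sync"
  | "A mod (2 * k + 1) = i - 1" "is_enc (choice_string k es i j ! A)"
  | "A mod (2 * k + 1) = j - 1" "is_enc (choice_string k es i j ! A)"
  using nth_choice_string[OF assms] nth_block[OF assms(1-3)]
  by (cases "A mod (2 * k + 1) \<le> k") (auto split: if_splits)

(* The shift is (k - r) mod (2k + 1), written without truncated subtraction. *)
lemma mod_window_shift:
  fixes r p c k :: nat
  assumes "r < 2 * k + 1" "p \<le> k" "c \<le> k" "(r + p) mod (2 * k + 1) = c"
  shows "p + k = (if r \<le> k then k - r else 3 * k + 1 - r) + c"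
  using assms by (auto simp: mod_if split: if_splits)

(* q is the window position of the first # at or after the window start; it may exceed k. *)
lemma window_shape:
  assumes "1 \<le> i" "i < j" "j \<le> k" and "choice_string k es i j = u @ t @ w" "length t = k + 1"
  obtains q where "\<And>p. p \<le> k \<Longrightarrow> t ! p \<noteq> Ident (pair_index k i j) \<Longrightarrow>
      p = q \<and> t ! p = Sync \<or> p + k + 1 = q + i \<and> is_enc (t ! p)
      \<or> p + k + 1 = q + j \<and> is_enc (t ! p)"
proof
  define r where "r = length u mod (2 * k + 1)"
  let ?q = "if r \<le> k then k - r else 3 * k + 1 - r"
  fix p assume p: "p \<le> k" "t ! p \<noteq> Ident (pair_index k i j)"
  have A: "length u + p < length (choice_string k es i j)"
    and t_p: "t ! p = choice_string k es i j ! (length u + p)"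
    using assms(4,5) p(1) by (auto simp: nth_append)
  have shift: "p + k = ?q + c" if "(length u + p) mod (2 * k + 1) = c" "c \<le> k" for c
    using mod_window_shift[of r k p c] that p(1) by (simp add: r_def mod_add_left_eq)
  from nth_choice_string_cases[OF assms(1-3) A]
  show "p = ?q \<and> t ! p = Sync \<or> p + k + 1 = ?q + i \<and> is_enc (t ! p)
    \<or> p + k + 1 = ?q + j \<and> is_enc (t ! p)"
  proof cases
    case 2
    then show ?thesis using shift[of k] t_p by simp
  next
    case 3
    then show ?thesis using shift[of "i - 1"] t_p assms(1-3) by simp
  next
    case 4
    then show ?thesis using shift[of "j - 1"] t_p assms(1-3) by simp
  qed (use p(2) t_p in simp)
qed

lemma window_at_sync_is_block:
  assumes "1 \<le> i" "i < j" "j \<le> k" and "choice_string k es i j = u @ t @ w" "length t = k + 1"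
    and "t ! k = Sync"
  shows "\<exists>e \<in> set es. t = block k i j e"
proof -
  define r where "r = length u mod (2 * k + 1)"
  define b where "b = length u div (2 * k + 1)"
  have r: "r < 2 * k + 1" by (simp add: r_def)
  have A: "length u + k < length (choice_string k es i j)" using assms(4,5) by simp
  then have "(length u + k) mod (2 * k + 1) = k"
    using assms(4-6) by (cases rule: nth_choice_string_cases[OF assms(1-3) A]) (auto simp: nth_append)
  then have "k + k = (if r \<le> k then k - r else 3 * k + 1 - r) + k"
    using mod_window_shift[OF r, of k k] by (simp add: r_def mod_add_left_eq)
  then have "r = 0" using r by (auto split: if_splits)
  then have u: "length u = b * (2 * k + 1)"
    using div_mult_mod_eq[of "length u" "2 * k + 1"] by (simp add: r_def b_def)
  have "t ! p = block k i j (es ! b) ! p \<and> b < length es" if "p \<le> k" for p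
  proof -
    have "(length u + p) mod (2 * k + 1) = p" "(length u + p) div (2 * k + 1) = b"
      using that by (simp_all del: mult_Suc_right add: u add.commute[of "b * _"])
    moreover have "t ! p = choice_string k es i j ! (length u + p)"
      and A: "length u + p < length (choice_string k es i j)"
      using assms(4,5) that by (auto simp: nth_append)
    ultimately show ?thesis using nth_choice_string[OF assms(1-3) A] that by simp
  qed
  then show ?thesis
    using assms(1-3,5) by (metis length_block nth_equalityI nth_mem le_simps(2) Suc_eq_plus1)
qed

lemma pair_index_less:
  assumes "1 \<le> i'" "i' < j'" "j' \<le> k" "i < i' \<or> i = i' \<and> j < j'"
  shows "pair_index k i j < pair_index k i' j'"
proof -
  let ?P = "\<lambda>i j. {(a, b). 1 \<le> a \<and> a < b \<and> b \<le> k \<and> (a < i \<or> a = i \<and> b \<le> j)}"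
  have "finite (?P i' j')" by (rule finite_subset[of _ "{..k} \<times> {..k}"]) auto
  moreover have "?P i j \<subseteq> ?P i' j'" "(i', j') \<in> ?P i' j' - ?P i j" using assms by auto
  then have "?P i j \<subset> ?P i' j'" by blast
  ultimately show ?thesis unfolding pair_index_def by (rule psubset_card_mono)
qed

lemma pair_index_eq_iff:
  assumes "1 \<le> i" "i < j" "j \<le> k" "1 \<le> i'" "i' < j'" "j' \<le> k"
  shows "pair_index k i j = pair_index k i' j' \<longleftrightarrow> i = i' \<and> j = j'"
  using pair_index_less[of i j k i' j'] pair_index_less[of i' j' k i j] assms
  by (metis less_irrefl linorder_neqE_nat)

lemma card_agree_add_hamming:
  assumes "length xs = length ys"
  shows "card {p. p < length xs \<and> xs ! p = ys ! p} + hamming xs ys = length xs"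
proof -
  have "{p. p < length xs \<and> xs ! p = ys ! p}
      \<union> {p. p < length xs \<and> p < length ys \<and> xs ! p \<noteq> ys ! p} = {..<length xs}"
    using assms by auto
  then show ?thesis
    unfolding hamming_def by (subst card_Un_disjoint[symmetric]) auto
qed

lemma card_le_two: "card {a, b} \<le> 2"
  by (simp add: card_insert_if)

lemma card_le_three: "card {a, b, c} \<le> 3"
  by (simp add: card_insert_if)

lemma sum_card_disjoint_le:
  assumes "finite I" "finite B" "\<And>x. x \<in> I \<Longrightarrow> A x \<subseteq> B"
    and "\<And>x y. x \<in> I \<Longrightarrow> y \<in> I \<Longrightarrow> x \<noteq> y \<Longrightarrow> A x \<inter> A y = {}"
  shows "(\<Sum>x\<in>I. card (A x)) \<le> card B"
proof -
  have "(\<Sum>x\<in>I. card (A x)) = card (\<Union>x\<in>I. A x)"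
    using assms by (intro card_UN_disjoint[symmetric]) (auto intro: finite_subset)
  also have "\<dots> \<le> card B" using assms(2,3) by (intro card_mono) auto
  finally show ?thesis .
qed

locale closest_substring_solution =
  fixes k :: nat and es :: "(nat \<times> nat) list" and s :: "sym list"
  assumes k3: "3 \<le> k"
    and length_s: "length s = k + 1"
    and close: "\<forall>i j. 1 \<le> i \<and> i < j \<and> j \<le> k \<longrightarrow>
        (\<exists>t. length t = k + 1 \<and> is_substring t (choice_string k es i j) \<and> hamming s t \<le> k - 2)"
begin

definition window :: "nat \<Rightarrow> nat \<Rightarrow> sym list" where
  "window i j = (SOME t. length t = k + 1 \<and> is_substring t (choice_string k es i j)
                        \<and> hamming s t \<le> k - 2)"

lemma window_spec:
  assumes "1 \<le> i" "i < j" "j \<le> k"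
  shows "length (window i j) = k + 1" "is_substring (window i j) (choice_string k es i j)"
    "hamming s (window i j) \<le> k - 2"
proof -
  have "\<exists>t. length t = k + 1 \<and> is_substring t (choice_string k es i j) \<and> hamming s t \<le> k - 2"
    using close assms by blast
  then show "length (window i j) = k + 1" "is_substring (window i j) (choice_string k es i j)"
    "hamming s (window i j) \<le> k - 2"
    unfolding window_def by (metis (mono_tags, lifting) someI_ex)+
qed

definition agree :: "nat \<Rightarrow> nat \<Rightarrow> nat set" where
  "agree i j = {p. p \<le> k \<and> s ! p = window i j ! p}"

fun phi_pos :: "nat \<times> nat \<Rightarrow> nat set" where
  "phi_pos (i, j) = {p. p \<le> k \<and> s ! p = Ident (pair_index k i j)}"

declare phi_pos.simps [simp del]

definition ident_pos :: "nat set" where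
  "ident_pos = {p. p \<le> k \<and> is_ident (s ! p)}"

definition pairs :: "(nat \<times> nat) set" where
  "pairs = {(i, j). 1 \<le> i \<and> i < j \<and> j \<le> k}"

lemma finite_phi_pos [simp]: "finite (phi_pos x)"
  by (cases x) (simp add: phi_pos.simps)

lemma finite_ident_pos [simp]: "finite ident_pos"
  by (simp add: ident_pos_def)

lemma card_agree_ge:
  assumes "1 \<le> i" "i < j" "j \<le> k"
  shows "3 \<le> card (agree i j)"
proof -
  have "agree i j = {p. p < length s \<and> s ! p = window i j ! p}"
    by (auto simp: agree_def length_s)
  then have "card (agree i j) + hamming s (window i j) = k + 1"
    using card_agree_add_hamming[of s "window i j"] window_spec(1)[OF assms] length_s by simp
  then show ?thesis using window_spec(3)[OF assms] k3 by linarith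
qed

lemma agree_cases:
  assumes "1 \<le> i" "i < j" "j \<le> k"
  obtains q where "\<And>p. p \<in> agree i j \<Longrightarrow> p \<in> phi_pos (i, j) \<or> p = q \<and> s ! p = Sync
      \<or> p + k + 1 = q + i \<and> is_enc (s ! p) \<or> p + k + 1 = q + j \<and> is_enc (s ! p)"
proof -
  obtain u w where "choice_string k es i j = u @ window i j @ w"
    using window_spec(2)[OF assms] by (auto simp: is_substring_def)
  from window_shape[OF assms this window_spec(1)[OF assms]] obtain q where q:
    "\<And>p. p \<le> k \<Longrightarrow> window i j ! p \<noteq> Ident (pair_index k i j) \<Longrightarrow>
      p = q \<and> window i j ! p = Sync \<or> p + k + 1 = q + i \<and> is_enc (window i j ! p)
      \<or> p + k + 1 = q + j \<and> is_enc (window i j ! p)"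
    by blast
  show ?thesis
  proof (rule that)
    fix p assume "p \<in> agree i j"
    then have p: "p \<le> k" "s ! p = window i j ! p" by (simp_all add: agree_def)
    show "p \<in> phi_pos (i, j) \<or> p = q \<and> s ! p = Sync
      \<or> p + k + 1 = q + i \<and> is_enc (s ! p) \<or> p + k + 1 = q + j \<and> is_enc (s ! p)"
    proof (cases "window i j ! p = Ident (pair_index k i j)")
      case True
      then show ?thesis using p by (simp add: phi_pos.simps)
    next
      case False
      then show ?thesis using q[OF p(1) False] p(2) by simp
    qed
  qed
qed

lemma card_phi_pos_ge:
  assumes "1 \<le> i" "i < j" "j \<le> k"
  shows "3 \<le> card (phi_pos (i, j)) + (k + 1 - card ident_pos)"
proof -
  let ?N = "{p. p \<le> k \<and> \<not> is_ident (s ! p)}"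
  obtain q where q: "\<And>p. p \<in> agree i j \<Longrightarrow> p \<in> phi_pos (i, j) \<or> p = q \<and> s ! p = Sync
      \<or> p + k + 1 = q + i \<and> is_enc (s ! p) \<or> p + k + 1 = q + j \<and> is_enc (s ! p)"
    using agree_cases[OF assms] by blast
  have "agree i j \<subseteq> phi_pos (i, j) \<union> ?N"
  proof
    fix p assume p: "p \<in> agree i j"
    then have "p \<le> k" by (simp add: agree_def)
    then show "p \<in> phi_pos (i, j) \<union> ?N" using q[OF p] not_is_ident_if_is_enc by auto
  qed
  then have "card (agree i j) \<le> card (phi_pos (i, j) \<union> ?N)" by (intro card_mono) simp_all
  also have "\<dots> \<le> card (phi_pos (i, j)) + card ?N" by (rule card_Un_le)
  finally have "card (agree i j) \<le> card (phi_pos (i, j)) + card ?N" .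
  moreover have "card ident_pos + card ?N = k + 1"
  proof -
    have "card (ident_pos \<union> ?N) = card ident_pos + card ?N"
      by (rule card_Un_disjoint) (auto simp: ident_pos_def)
    moreover have "ident_pos \<union> ?N = {..k}" by (auto simp: ident_pos_def)
    ultimately show ?thesis by simp
  qed
  ultimately show ?thesis using card_agree_ge[OF assms] by linarith
qed

lemma finite_pairs: "finite pairs"
  by (rule finite_subset[of _ "{..k} \<times> {..k}"]) (auto simp: pairs_def)

lemma phi_pos_disjoint:
  assumes "x \<in> pairs" "y \<in> pairs" "x \<noteq> y"
  shows "phi_pos x \<inter> phi_pos y = {}"
proof -
  obtain i j i' j' where x: "x = (i, j)" and y: "y = (i', j')" by fastforce
  then have "pair_index k i j \<noteq> pair_index k i' j'"
    using assms pair_index_eq_iff[of i j k i' j'] by (simp add: pairs_def)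
  then show ?thesis by (auto simp: x y phi_pos.simps)
qed

lemma sum_card_phi_pos_le:
  assumes "P \<subseteq> pairs"
  shows "(\<Sum>x\<in>P. card (phi_pos x)) \<le> card ident_pos"
proof (rule sum_card_disjoint_le)
  show "finite P" using assms finite_pairs by (rule finite_subset)
  show "phi_pos x \<subseteq> ident_pos" for x by (cases x) (auto simp: ident_pos_def phi_pos.simps)
  show "phi_pos x \<inter> phi_pos y = {}" if "x \<in> P" "y \<in> P" "x \<noteq> y" for x y
    using that assms phi_pos_disjoint by blast
qed simp

lemma card_pairs_le:
  assumes "P \<subseteq> pairs" "\<And>x. x \<in> P \<Longrightarrow> phi_pos x \<noteq> {}"
  shows "card P \<le> card ident_pos"
proof -
  have "card P * 1 \<le> (\<Sum>x\<in>P. card (phi_pos x))"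
    using sum_bounded_below[of P 1 "\<lambda>x. card (phi_pos x)"] assms(2) by (simp add: Suc_le_eq card_gt_0_iff)
  then show ?thesis using sum_card_phi_pos_le[OF assms(1)] by linarith
qed

lemma card_ident_pos_le: "card ident_pos + 2 \<le> k"
proof (rule ccontr)
  assume "\<not> card ident_pos + 2 \<le> k"
  moreover have "card ident_pos \<le> k + 1"
    using card_mono[of "{..k}" ident_pos] by (auto simp: ident_pos_def)
  ultimately consider "card ident_pos = k - 1" | "card ident_pos = k" | "card ident_pos = k + 1"
    by linarith
  note card_cases = this
  \<comment> \<open>each of these k pairs needs 3 - (k + 1 - card ident_pos) identification positions of its own\<close>
  let ?P = "insert (2 :: nat, 3 :: nat) ((\<lambda>j. (1, j)) ` {2..k})"
  have P: "?P \<subseteq> pairs" using k3 by (auto simp: pairs_def)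
  have "card ?P = k" using k3 by (simp add: card_image inj_on_def image_iff)
  moreover have "3 - (k + 1 - card ident_pos) \<le> card (phi_pos x)" if "x \<in> ?P" for x
    using card_phi_pos_ge[of "fst x" "snd x"] P that by (auto simp: pairs_def)
  ultimately have "k * (3 - (k + 1 - card ident_pos)) \<le> (\<Sum>x\<in>?P. card (phi_pos x))"
    using sum_bounded_below[of ?P "3 - (k + 1 - card ident_pos)" "\<lambda>x. card (phi_pos x)"] by simp
  also have "\<dots> \<le> card ident_pos" by (rule sum_card_phi_pos_le[OF P])
  finally have "k * (3 - (k + 1 - card ident_pos)) \<le> card ident_pos" .
  with card_cases show False
    using k3 by cases simp_all
qed

lemma shift_if_phi_pos_empty:
  assumes "1 \<le> i" "i < j" "j \<le> k" "phi_pos (i, j) = {}"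
  obtains d where "d < i" "s ! (k - d) = Sync" "window i j ! (k - d) = Sync"
    "is_enc (s ! (i - 1 - d))" "s ! (i - 1 - d) = window i j ! (i - 1 - d)"
    "is_enc (s ! (j - 1 - d))" "s ! (j - 1 - d) = window i j ! (j - 1 - d)"
proof -
  obtain q where q0: "\<And>p. p \<in> agree i j \<Longrightarrow> p \<in> phi_pos (i, j) \<or> p = q \<and> s ! p = Sync
      \<or> p + k + 1 = q + i \<and> is_enc (s ! p) \<or> p + k + 1 = q + j \<and> is_enc (s ! p)"
    using agree_cases[OF assms(1-3)] by blast
  have q: "p = q \<and> s ! p = Sync \<or> p + k + 1 = q + i \<and> is_enc (s ! p)
      \<or> p + k + 1 = q + j \<and> is_enc (s ! p)"
    if "p \<in> agree i j" for p
    using q0[OF that] assms(4) by simp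
  have M: "agree i j \<subseteq> {p. p \<le> k \<and> (p = q \<or> p + k + 1 = q + i \<or> p + k + 1 = q + j)}"
    using q by (auto simp: agree_def)
  have card2: "card (agree i j) \<le> 2" if "agree i j \<subseteq> {a, b}" for a b
    using card_mono[OF _ that] card_le_two[of a b] by simp
  have "q \<le> k"
  proof (rule ccontr)
    assume "\<not> q \<le> k"
    then have "agree i j \<subseteq> {q + i - (k + 1), q + j - (k + 1)}" using M by auto
    then show False using card2 card_agree_ge[OF assms(1-3)] by fastforce
  qed
  have "k + 1 \<le> q + i"
  proof (rule ccontr)
    assume "\<not> k + 1 \<le> q + i"
    then have "agree i j \<subseteq> {q, q + j - (k + 1)}" using M by auto
    then show False using card2 card_agree_ge[OF assms(1-3)] by fastforce
  qed
  \<comment> \<open>the window starts at offset d inside the block whose # it contains\<close>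
  define d where "d = k - q"
  have "agree i j \<subseteq> {k - d, i - 1 - d, j - 1 - d}"
    using M \<open>q \<le> k\<close> \<open>k + 1 \<le> q + i\<close> by (auto simp: d_def)
  moreover have "card {k - d, i - 1 - d, j - 1 - d} \<le> card (agree i j)"
    using card_agree_ge[OF assms(1-3)] card_le_three[of "k - d" "i - 1 - d" "j - 1 - d"] by simp
  ultimately have "agree i j = {k - d, i - 1 - d, j - 1 - d}" by (intro card_seteq) simp_all
  then have m: "k - d \<in> agree i j" "i - 1 - d \<in> agree i j" "j - 1 - d \<in> agree i j" by auto
  have "q = k - d" "d < i" using \<open>q \<le> k\<close> \<open>k + 1 \<le> q + i\<close> by (auto simp: d_def)
  then have "s ! (k - d) = Sync" "is_enc (s ! (i - 1 - d))" "is_enc (s ! (j - 1 - d))"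
    using q[OF m(1)] q[OF m(2)] q[OF m(3)] assms(1-3) by auto
  moreover have "s ! p = window i j ! p" if "p \<in> agree i j" for p
    using that by (simp add: agree_def)
  ultimately show ?thesis using that \<open>d < i\<close> m by simp
qed

lemma sync_at_end_if_phi_pos_empty:
  assumes "1 < j" "j \<le> k" "phi_pos (1, j) = {}"
  shows "s ! k = Sync" "is_enc (s ! 0)" "is_enc (s ! (j - 1))"
proof -
  obtain d where "d < 1" "s ! (k - d) = Sync" "window 1 j ! (k - d) = Sync"
    "is_enc (s ! (1 - 1 - d))" "s ! (1 - 1 - d) = window 1 j ! (1 - 1 - d)"
    "is_enc (s ! (j - 1 - d))" "s ! (j - 1 - d) = window 1 j ! (j - 1 - d)"
    by (rule shift_if_phi_pos_empty[OF order_refl assms])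
  then show "s ! k = Sync" "is_enc (s ! 0)" "is_enc (s ! (j - 1))" by simp_all
qed

lemma sync_at_end: "s ! k = Sync" "is_enc (s ! 0)"
proof -
  have "\<not> (\<forall>j \<in> {2..k}. phi_pos (1, j) \<noteq> {})"
  proof
    assume "\<forall>j \<in> {2..k}. phi_pos (1, j) \<noteq> {}"
    then have "card ((\<lambda>j. (1 :: nat, j)) ` {2..k}) \<le> card ident_pos"
      by (intro card_pairs_le) (auto simp: pairs_def)
    then show False using card_ident_pos_le by (simp add: card_image inj_on_def)
  qed
  then obtain j where "2 \<le> j" "j \<le> k" "phi_pos (1, j) = {}" by auto
  then show "s ! k = Sync" "is_enc (s ! 0)" using sync_at_end_if_phi_pos_empty[of j] by auto
qed

definition non_enc_pos :: "nat set" where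
  "non_enc_pos = {p. p < k \<and> \<not> is_enc (s ! p)}"

lemma phi_pos_nonempty_if_non_enc:
  assumes "p \<in> non_enc_pos"
  shows "0 < p" "phi_pos (1, Suc p) \<noteq> {}"
proof -
  show "0 < p" using assms sync_at_end(2) by (auto simp: non_enc_pos_def intro!: gr0I)
  then show "phi_pos (1, Suc p) \<noteq> {}"
    using assms sync_at_end_if_phi_pos_empty(3)[of "Suc p"] by (auto simp: non_enc_pos_def)
qed

lemma card_non_enc_pos_le: "card non_enc_pos \<le> card ident_pos"
proof -
  have "card non_enc_pos = card ((\<lambda>p. (1 :: nat, Suc p)) ` non_enc_pos)"
    by (simp add: card_image inj_on_def)
  also have "\<dots> \<le> card ident_pos"
    using phi_pos_nonempty_if_non_enc by (intro card_pairs_le) (auto simp: pairs_def non_enc_pos_def)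
  finally show ?thesis .
qed

lemma ident_pos_eq_non_enc_pos: "ident_pos = non_enc_pos"
proof (rule card_seteq)
  show "finite non_enc_pos" by (simp add: non_enc_pos_def)
  show "ident_pos \<subseteq> non_enc_pos"
  proof
    fix p assume "p \<in> ident_pos"
    then have "p \<le> k" "is_ident (s ! p)" by (simp_all add: ident_pos_def)
    moreover from this have "p \<noteq> k" using sync_at_end(1) by auto
    ultimately show "p \<in> non_enc_pos" using not_is_ident_if_is_enc by (auto simp: non_enc_pos_def)
  qed
qed (rule card_non_enc_pos_le)

lemma no_sync_before_end:
  assumes "p < k"
  shows "s ! p \<noteq> Sync"
proof
  assume "s ! p = Sync"
  with assms have "p \<in> ident_pos" using ident_pos_eq_non_enc_pos by (simp add: non_enc_pos_def)
  with \<open>s ! p = Sync\<close> show False by (simp add: ident_pos_def)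
qed

lemma non_enc_pos_empty: "non_enc_pos = {}"
proof (rule ccontr)
  assume "non_enc_pos \<noteq> {}"
  then obtain p where p: "p \<in> non_enc_pos" by blast
  then have "0 < p" "p < k" "\<not> is_enc (s ! p)"
    using phi_pos_nonempty_if_non_enc(1) by (auto simp: non_enc_pos_def)
  \<comment> \<open>(2, j) is none of the pairs (1, Suc p), and p is one of its encoding positions 1, j - 1\<close>
  define j where "j = (if p = 1 then 3 else Suc p)"
  have j: "2 < j" "j \<le> k" "p = 1 \<or> p = j - 1"
    using \<open>0 < p\<close> \<open>p < k\<close> k3 by (auto simp: j_def)
  have "phi_pos (2, j) \<noteq> {}"
  proof
    assume "phi_pos (2, j) = {}"
    then obtain d where "d < 2" "s ! (k - d) = Sync" "window 2 j ! (k - d) = Sync"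
      "is_enc (s ! (2 - 1 - d))" "s ! (2 - 1 - d) = window 2 j ! (2 - 1 - d)"
      "is_enc (s ! (j - 1 - d))" "s ! (j - 1 - d) = window 2 j ! (j - 1 - d)"
      by (rule shift_if_phi_pos_empty[OF one_le_numeral j(1,2)])
    moreover have "d = 0"
      using no_sync_before_end[of "k - d"] \<open>s ! (k - d) = Sync\<close> \<open>d < 2\<close> k3
      by (cases "d = 0") simp_all
    ultimately show False using j(3) \<open>\<not> is_enc (s ! p)\<close> by auto
  qed
  let ?P = "insert (2, j) ((\<lambda>p. (1 :: nat, Suc p)) ` non_enc_pos)"
  have "card ?P \<le> card ident_pos"
  proof (rule card_pairs_le)
    show "?P \<subseteq> pairs" using j phi_pos_nonempty_if_non_enc(1) by (auto simp: pairs_def non_enc_pos_def)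
    show "phi_pos x \<noteq> {}" if "x \<in> ?P" for x
      using that phi_pos_nonempty_if_non_enc(2) \<open>phi_pos (2, j) \<noteq> {}\<close> by auto
  qed
  moreover have "card ?P = Suc (card non_enc_pos)"
  proof -
    have "finite non_enc_pos" by (simp add: non_enc_pos_def)
    then show ?thesis by (simp add: card_insert_if image_iff card_image inj_on_def)
  qed
  ultimately show False using ident_pos_eq_non_enc_pos by simp
qed

lemma window_aligned:
  assumes "1 \<le> i" "i < j" "j \<le> k"
  shows "window i j ! k = Sync" "s ! (i - 1) = window i j ! (i - 1)" "s ! (j - 1) = window i j ! (j - 1)"
proof -
  have "phi_pos (i, j) = {}"
    using non_enc_pos_empty ident_pos_eq_non_enc_pos by (auto simp: ident_pos_def phi_pos.simps)
  then obtain d where "d < i" "s ! (k - d) = Sync" "window i j ! (k - d) = Sync"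
    "is_enc (s ! (i - 1 - d))" "s ! (i - 1 - d) = window i j ! (i - 1 - d)"
    "is_enc (s ! (j - 1 - d))" "s ! (j - 1 - d) = window i j ! (j - 1 - d)"
    by (rule shift_if_phi_pos_empty[OF assms])
  moreover have "d = 0"
    using no_sync_before_end[of "k - d"] \<open>s ! (k - d) = Sync\<close> \<open>d < i\<close> assms
    by (cases "d = 0") simp_all
  ultimately show "window i j ! k = Sync" "s ! (i - 1) = window i j ! (i - 1)"
    "s ! (j - 1) = window i j ! (j - 1)" by simp_all
qed

lemma edge_of_pair:
  assumes "1 \<le> i" "i < j" "j \<le> k"
  shows "(enc_index (s ! (i - 1)), enc_index (s ! (j - 1))) \<in> set es"
proof -
  obtain u w where "choice_string k es i j = u @ window i j @ w"
    using window_spec(2)[OF assms] by (auto simp: is_substring_def)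
  then obtain e where "e \<in> set es" "window i j = block k i j e"
    using window_at_sync_is_block[OF assms _ window_spec(1)[OF assms] window_aligned(1)[OF assms]] by blast
  moreover have "block k i j e ! (i - 1) = Enc (fst e)" "block k i j e ! (j - 1) = Enc (snd e)"
    using nth_block[OF assms] assms by auto
  ultimately show ?thesis using window_aligned(2,3)[OF assms] by simp
qed

end

lemma clique_if_ordered_edges:
  fixes h :: "nat \<Rightarrow> nat"
  assumes "\<forall>(r, q) \<in> set es. 1 \<le> r \<and> r < q \<and> q \<le> n" "2 \<le> k"
    and "\<And>a b. a < b \<Longrightarrow> b < k \<Longrightarrow> (h a, h b) \<in> set es"
  shows "(\<forall>a < k. h a \<in> {1..n}) \<and> inj_on h {..<k}
    \<and> (\<forall>a < k. \<forall>b < k. a \<noteq> b \<longrightarrow> adjacent es (h a) (h b))"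
proof -
  have ord: "1 \<le> h a \<and> h a < h b \<and> h b \<le> n" if "a < b" "b < k" for a b
    using assms(1) assms(3)[OF that] by auto
  have "h a \<in> {1..n}" if "a < k" for a
    using ord[of a "a + 1"] ord[of 0 a] that assms(2) by (cases "a + 1 < k") auto
  moreover have "inj_on h {..<k}"
    by (rule inj_onI) (metis lessThan_iff linorder_neqE_nat ord less_irrefl)
  moreover have "adjacent es (h a) (h b)" if "a < b" "b < k" for a b
    using assms(3)[OF that] ord[OF that] by (simp add: adjacent_def)
  then have "adjacent es (h a) (h b)" if "a < k" "b < k" "a \<noteq> b" for a b
    using that by (metis adjacent_def linorder_neqE_nat max.commute min.commute)
  ultimately show ?thesis by blast
qed

theorem proposition2:
  fixes n k :: nat and es :: "(nat \<times> nat) list" and s :: "sym list"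
  assumes edges: "\<forall>(r, q) \<in> set es. 1 \<le> r \<and> r < q \<and> q \<le> n"
    and simple: "distinct es"
    and k3: "k \<ge> 3"
    and len: "length s = k + 1"
    and close: "\<forall>i j. 1 \<le> i \<and> i < j \<and> j \<le> k \<longrightarrow>
        (\<exists>t. length t = k + 1 \<and> is_substring t (choice_string k es i j)
              \<and> hamming s t \<le> k - 2)"
  shows "\<exists>h. (\<forall>a < k. s ! a = Enc (h a) \<and> h a \<in> {1..n})
           \<and> inj_on h {..<k}
           \<and> (\<forall>a < k. \<forall>b < k. a \<noteq> b \<longrightarrow> adjacent es (h a) (h b))"
proof -
  interpret closest_substring_solution k es s using k3 len close by unfold_locales
  define h where "h a = enc_index (s ! a)" for a
  have "s ! a = Enc (h a)" if "a < k" for a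
    using non_enc_pos_empty that by (auto simp: h_def non_enc_pos_def Enc_enc_index)
  moreover have "(h a, h b) \<in> set es" if "a < b" "b < k" for a b
    using edge_of_pair[of "Suc a" "Suc b"] that by (simp add: h_def)
  ultimately show ?thesis
    using clique_if_ordered_edges[OF edges, of k h] k3 by auto
qed

end
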